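(* For every base $\mathcal{B}$, atomic multisets $L,K$ and ILL formula $\chi$: if $\Vdash^L_{\mathcal{B}}1$ and $\Vdash^K_{\mathcal{B}}\chi$, then $\Vdash^{L,K}_{\mathcal{B}}\chi$.
   Context: Fix a set $\mathbb{A}$ of propositional atoms. ILL formulae: $\phi ::= p\in\mathbb{A} \mid \top \mid 0 \mid 1 \mid \phi\multimap\phi \mid \phi\otimes\phi \mid \phi\,\&\,\phi \mid \phi\oplus\phi \mid\ !\phi$. All multisets are finite; "$\Gamma,\Delta$" denotes multiset union. Atomic rules and bases: an atomic sequent is $P\Rightarrow p$ with $P$ a multiset of atoms, $p$ an atom. An atomic box is a multiset of atomic sequents. An atomic rule is a triple $\langle\mathbf{A},\mathbf{S},p\rangle$ with $\mathbf{A}$ a multiset of atomic boxes, $\mathbf{S}$ an atomic box, $p$ an atom. A base is a set of atomic rules. An atom $p$ is persistent in $\mathcal{B}$ if some $\langle\varnothing,\mathbf{S},p\rangle\in\mathcal{B}$ has $\mathbf{S}\neq\varnothing$. Derivability $\vdash_{\mathcal{B}}$: (Ref) $p\vdash_{\mathcal{B}}p$; (App) if $\langle\mathbf{A},\mathbf{S},p\rangle\in\mathcal{B}$ with $\mathbf{A}=\{\mathbf{T}_1,\dots,\mathbf{T}_m\}$, and there are atomic multisets $C_1,\dots,C_n$ ($n\ge m$) and a multiset $D=\{d_{m+1},\dots,d_n\}$ of atoms persistent in $\mathcal{B}$ such that $C_i,Q\vdash_{\mathcal{B}}q$ for every $i\le m$ and every $Q\Rightarrow q\in\mathbf{T}_i$,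 $C_j\vdash_{\mathcal{B}}d_j$ for every $m<j\le n$, and $D,U\vdash_{\mathcal{B}}v$ for every $U\Rightarrow v\in\mathbf{S}$, then $C_1,\dots,C_n\vdash_{\mathcal{B}}p$. Support $\Vdash^L_{\mathcal{B}}$ (base $\mathcal{B}$, atomic multiset $L$), by induction on formulae: $\Vdash^L_{\mathcal{B}}p$ iff $L\vdash_{\mathcal{B}}p$; $\Vdash^L_{\mathcal{B}}\varphi\multimap\psi$ iff $\varphi\Vdash^L_{\mathcal{B}}\psi$; $\Vdash^L_{\mathcal{B}}\varphi\otimes\psi$ iff for all $\mathcal{C}\supseteq\mathcal{B}$, atomic $K$, atoms $p$: if $\varphi,\psi\Vdash^K_{\mathcal{C}}p$ then $\Vdash^{L,K}_{\mathcal{C}}p$; $\Vdash^L_{\mathcal{B}}1$ iff for all $\mathcal{C}\supseteq\mathcal{B}$, $K$, $p$: if $\Vdash^K_{\mathcal{C}}p$ then $\Vdash^{L,K}_{\mathcal{C}}p$; $\Vdash^L_{\mathcal{B}}\varphi\&\psi$ iff $\Vdash^L_{\mathcal{B}}\varphi$ and $\Vdash^L_{\mathcal{B}}\psi$; $\Vdash^L_{\mathcal{B}}\varphi\oplus\psi$ iff for all $\mathcal{C}\supseteq\mathcal{B}$, $K$, $p$: if $\varphi\Vdash^K_{\mathcal{C}}p$ and $\psi\Vdash^K_{\mathcal{C}}p$ then $\Vdash^{L,K}_{\mathcal{C}}p$; $\Vdash^L_{\mathcal{B}}0$ iff $\Vdash^{L,K}_{\mathcal{B}}p$ for all atoms $p$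 and atomic $K$; $\Vdash^L_{\mathcal{B}}\top$ always; $\Vdash^L_{\mathcal{B}}!\varphi$ iff for all $\mathcal{C}\supseteq\mathcal{B}$, $K$, $p$: if (for all $\mathcal{D}\supseteq\mathcal{C}$, $\Vdash^{\varnothing}_{\mathcal{D}}\varphi$ implies $\Vdash^K_{\mathcal{D}}p$) then $\Vdash^{L,K}_{\mathcal{C}}p$. For nonempty multisets: $\Vdash^L_{\mathcal{B}}\Gamma,\Delta$ iff $L=K,M$ with $\Vdash^K_{\mathcal{B}}\Gamma$ and $\Vdash^M_{\mathcal{B}}\Delta$. For a nonempty antecedent written $!\Delta,\Theta$, where $!\Delta$ collects the formulae with top-level connective $!$ (with $\Delta$ the formulae under those $!$) and $\Theta$ contains none: $!\Delta,\Theta\Vdash^L_{\mathcal{B}}\varphi$ iff for all $\mathcal{C}\supseteq\mathcal{B}$ and atomic $K$, if $\Vdash^{\varnothing}_{\mathcal{C}}\delta$ for every $\delta\in\Delta$ and $\Vdash^K_{\mathcal{C}}\Theta$ then $\Vdash^{L,K}_{\mathcal{C}}\varphi$ (when $\Theta$ is empty, $K$ is empty). An empty antecedent: $\varnothing\Vdash^L_{\mathcal{B}}\varphi$ means $\Vdash^L_{\mathcal{B}}\varphi$. *)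

theory Defs
  imports Main "HOL-Library.Multiset"
begin

datatype 'a form =
    Atom 'a
  | Top
  | Zero
  | One
  | Lolli "'a form" "'a form"
  | Tensor "'a form" "'a form"
  | With "'a form" "'a form"
  | Plus "'a form" "'a form"
  | Bang "'a form"

type_synonym 'a asequent = "'a multiset \<times> 'a"
type_synonym 'a abox = "'a asequent multiset"
type_synonym 'a arule = "'a abox multiset \<times> 'a abox \<times> 'a"   \<comment> \<open>\<langle>A, S, p\<rangle>\<close>
type_synonym 'a base = "'a arule set"

definition persistent :: "'a base \<Rightarrow> 'a \<Rightarrow> bool" where
  "persistent B p \<longleftrightarrow> (\<exists>S. ({#}, S, p) \<in> B \<and> S \<noteq> {#})"

text \<open>Derivability. The boxes T_1..T_m of the multiset A are listed as Ts,
  the atomic multisets C_1..C_n as Cs (n = m + length ds), and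
  D = d_(m+1) .. d_n as the list ds.\<close>

inductive derives :: "'a base \<Rightarrow> 'a multiset \<Rightarrow> 'a \<Rightarrow> bool" for B :: "'a base" where
  Ref: "derives B {#p#} p"
| App: "\<lbrakk> (mset Ts, S, p) \<in> B;
          length Cs = length Ts + length ds;
          \<forall>d\<in>set ds. persistent B d;
          \<forall>i<length Ts. \<forall>x. x \<in># Ts ! i \<longrightarrow> derives B (Cs ! i + fst x) (snd x);
          \<forall>j<length ds. derives B (Cs ! (length Ts + j)) (ds ! j);
          \<forall>x. x \<in># S \<longrightarrow> derives B (mset ds + fst x) (snd x) \<rbrakk>
        \<Longrightarrow> derives B (sum_list Cs) p"

fun is_bang :: "'a form \<Rightarrow> bool" where
  "is_bang (Bang _) = True"
| "is_bang _ = False"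

fun bang_bodies :: "'a form list \<Rightarrow> 'a form list" where
  "bang_bodies [] = []"
| "bang_bodies (Bang d # G) = d # bang_bodies G"
| "bang_bodies (_ # G) = bang_bodies G"

fun supp_list :: "('a form \<Rightarrow> 'a base \<Rightarrow> 'a multiset \<Rightarrow> bool) \<Rightarrow> 'a form list \<Rightarrow> 'a base \<Rightarrow> 'a multiset \<Rightarrow> bool" where
  "supp_list sem [] B K \<longleftrightarrow> K = {#}"
| "supp_list sem (x # G) B K \<longleftrightarrow> (\<exists>K1 K2. K = K1 + K2 \<and> sem x B K1 \<and> supp_list sem G B K2)"

text \<open>Antecedent support  !Delta, Theta ||-^L_B chi, where the antecedent is the list G,
  sem is the support relation (only used on members of G and bodies of !-members),
  and Q C M stands for ||-^M_C chi.\<close>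
definition ante :: "('a form \<Rightarrow> 'a base \<Rightarrow> 'a multiset \<Rightarrow> bool) \<Rightarrow> 'a form list \<Rightarrow> 'a base \<Rightarrow> 'a multiset
                     \<Rightarrow> ('a base \<Rightarrow> 'a multiset \<Rightarrow> bool) \<Rightarrow> bool" where
  "ante sem G B L Q \<longleftrightarrow>
     (\<forall>C K. B \<subseteq> C \<longrightarrow> (\<forall>d\<in>set (bang_bodies G). sem d C {#})
        \<longrightarrow> supp_list sem (filter (\<lambda>x. \<not> is_bang x) G) C K \<longrightarrow> Q C (L + K))"

definition ante_forms :: "'a form list \<Rightarrow> 'a form set" where
  "ante_forms G = set G \<union> set (bang_bodies G)"

lemma bang_bodies_size: "d \<in> set (bang_bodies G) \<Longrightarrow> \<exists>x\<in>set G. size d < size x"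
  by (induction G rule: bang_bodies.induct) auto

lemma ante_forms_size: "x \<in> ante_forms G \<Longrightarrow> \<exists>y\<in>set G. size x \<le> size y"
  unfolding ante_forms_def using bang_bodies_size[of x G] by (auto intro: less_imp_le)

function supp :: "'a form \<Rightarrow> 'a base \<Rightarrow> 'a multiset \<Rightarrow> bool" where
  "supp (Atom p) B L \<longleftrightarrow> derives B L p"
| "supp (Lolli a b) B L \<longleftrightarrow>
     ante (\<lambda>x C K. if x \<in> ante_forms [a] then supp x C K else False) [a] B L (\<lambda>C M. supp b C M)"
| "supp (Tensor a b) B L \<longleftrightarrow>
     (\<forall>C K p. B \<subseteq> C \<longrightarrow>
        ante (\<lambda>x C K. if x \<in> ante_forms [a, b] then supp x C K else False) [a, b] C K (\<lambda>D M. derives D M p)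
        \<longrightarrow> derives C (L + K) p)"
| "supp One B L \<longleftrightarrow> (\<forall>C K p. B \<subseteq> C \<longrightarrow> derives C K p \<longrightarrow> derives C (L + K) p)"
| "supp (With a b) B L \<longleftrightarrow> supp a B L \<and> supp b B L"
| "supp (Plus a b) B L \<longleftrightarrow>
     (\<forall>C K p. B \<subseteq> C \<longrightarrow>
        ante (\<lambda>x C K. if x \<in> ante_forms [a] then supp x C K else False) [a] C K (\<lambda>D M. derives D M p)
        \<longrightarrow> ante (\<lambda>x C K. if x \<in> ante_forms [b] then supp x C K else False) [b] C K (\<lambda>D M. derives D M p)
        \<longrightarrow> derives C (L + K) p)"
| "supp Zero B L \<longleftrightarrow> (\<forall>p K. derives B (L + K) p)"
| "supp Top B L \<longleftrightarrow> True"
| "supp (Bang a) B L \<longleftrightarrow>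
     (\<forall>C K p. B \<subseteq> C \<longrightarrow> (\<forall>D. C \<subseteq> D \<longrightarrow> supp a D {#} \<longrightarrow> derives D K p)
        \<longrightarrow> derives C (L + K) p)"
  by pat_completeness auto
termination
  by (relation "measure (\<lambda>(x, _, _). size x)") (auto dest!: ante_forms_size)

end

theory Submission
  imports Defs
begin

text \<open>Support of \<open>1\<close> by \<open>L\<close> says that \<open>L\<close> may be added to the context of any atomic derivation
  over any extension of the base. Every clause of support other than \<open>\<multimap>\<close> and \<open>&\<close> ends in such
  an atomic derivation, so \<open>L\<close> is absorbed there; \<open>\<multimap>\<close> and \<open>&\<close> reduce to their components
  (over extended bases, which is why \<open>B\<close> is generalised in the induction).\<close>

lemma supp_One_mono: "supp One B L \<Longrightarrow> B \<subseteq> C \<Longrightarrow> supp One C L"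
  by auto

lemma supp_One_derives_add:
  assumes "supp One B L" and "B \<subseteq> C" and "derives C (K + M) p"
  shows "derives C (L + K + M) p"
  using assms by (simp add: add.assoc)

lemma ante_add_context:
  assumes "ante sem G B K Q"
    and "\<And>C M. B \<subseteq> C \<Longrightarrow> Q C (K + M) \<Longrightarrow> Q' C (L + K + M)"
  shows "ante sem G B (L + K) Q'"
  using assms unfolding ante_def by blast

theorem lemma6:
  fixes B :: "'a base" and L K :: "'a multiset" and \<chi> :: "'a form"
  assumes "supp One B L"
    and "supp \<chi> B K"
  shows "supp \<chi> B (L + K)"
  using assms
proof (induction \<chi> arbitrary: B K)
  case (Lolli a b)
  have "supp b C (L + K + M)" if "B \<subseteq> C" and "supp b C (K + M)" for C M
    using Lolli.IH(2)[OF supp_One_mono[OF Lolli.prems(1)]] that by (simp add: add.assoc)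
  with Lolli.prems(2) show ?case
    by (simp only: supp.simps) (rule ante_add_context)
next
  case (With a b)
  then show ?case by simp
qed (auto intro: supp_One_derives_add)

end
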